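(* Let $L$ be a Lie algebra over a field $k$ generated by its pure extremal elements, let $x,y\in E$ with $g(x,y)=1$ and let $L=\bigoplus_{i=-2}^2L_i$ be the associated $5$-grading. Let $\varphi=\exp(y)\exp(x)\exp(y)$. Then $\varphi(x)=y$, $\varphi(y)=x$, $\varphi(l_{-1})=[y,l_{-1}]$, $\varphi(l_0)=l_0+[x,[y,l_0]]$ and $\varphi(l_1)=[x,l_1]$ for all $l_{-1}\in L_{-1}$, $l_0\in L_0$, $l_1\in L_1$.
   Context: A nonzero $a\in L$ is extremal if there is $g_a\colon L\to k$ with $[a,[a,u]]=2g_a(u)a$, $[[a,u],[a,w]]=g_a([u,w])a+g_a(w)[a,u]-g_a(u)[a,w]$, $[a,[u,[a,w]]]=g_a([u,w])a-g_a(w)[a,u]-g_a(u)[a,w]$ for all $u,w$; sandwiches satisfy $[a,[a,u]]=0=[a,[u,[a,w]]]$ (and then $g_a=0$ by convention); pure = non-sandwich; $E$ = set of extremal elements; $g$ = unique symmetric bilinear form with $g(a,u)=g_a(u)$ for $a\in E$. $\exp(a)(u)=u+[a,u]+g_a(u)a$. The $5$-grading associated with $x,y$: $L_{-2}=kx$, $L_{-1}=[x,U]$, $L_0=\{l:[x,l]\in kx,[y,l]\in ky\}$, $L_1=[y,U]$, $L_2=ky$, $U=\{u:g(u,x)=g(u,y)=g(u,[x,y])=0\}$. *)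

theory Defs
  imports Main "HOL.Vector_Spaces"
begin

definition lie_algebra :: "('k::field \<Rightarrow> 'l::ab_group_add \<Rightarrow> 'l) \<Rightarrow> ('l \<Rightarrow> 'l \<Rightarrow> 'l) \<Rightarrow> bool" where
  "lie_algebra sc br \<longleftrightarrow>
     vector_space sc \<and>
     (\<forall>x. Vector_Spaces.linear sc sc (br x)) \<and>
     (\<forall>y. Vector_Spaces.linear sc sc (\<lambda>x. br x y)) \<and>
     (\<forall>x. br x x = 0) \<and>
     (\<forall>x y z. br x (br y z) + br y (br z x) + br z (br x y) = 0)"

definition extremal_form :: "('k::field \<Rightarrow> 'l::ab_group_add \<Rightarrow> 'l) \<Rightarrow> ('l \<Rightarrow> 'l \<Rightarrow> 'l) \<Rightarrow> 'l \<Rightarrow> ('l \<Rightarrow> 'k) \<Rightarrow> bool" where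
  "extremal_form sc br a f \<longleftrightarrow>
     (\<forall>u w.
        br a (br a u) = sc (2 * f u) a \<and>
        br (br a u) (br a w) = sc (f (br u w)) a + sc (f w) (br a u) - sc (f u) (br a w) \<and>
        br a (br u (br a w)) = sc (f (br u w)) a - sc (f w) (br a u) - sc (f u) (br a w))"

definition extremal :: "('k::field \<Rightarrow> 'l::ab_group_add \<Rightarrow> 'l) \<Rightarrow> ('l \<Rightarrow> 'l \<Rightarrow> 'l) \<Rightarrow> 'l \<Rightarrow> bool" where
  "extremal sc br a \<longleftrightarrow> a \<noteq> 0 \<and> (\<exists>f. extremal_form sc br a f)"

definition extremal_set :: "('k::field \<Rightarrow> 'l::ab_group_add \<Rightarrow> 'l) \<Rightarrow> ('l \<Rightarrow> 'l \<Rightarrow> 'l) \<Rightarrow> 'l set" where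
  "extremal_set sc br = {a. extremal sc br a}"

definition sandwich :: "('l::ab_group_add \<Rightarrow> 'l \<Rightarrow> 'l) \<Rightarrow> 'l \<Rightarrow> bool" where
  "sandwich br a \<longleftrightarrow> (\<forall>u w. br a (br a u) = 0 \<and> br a (br u (br a w)) = 0)"

definition pure_extremal :: "('k::field \<Rightarrow> 'l::ab_group_add \<Rightarrow> 'l) \<Rightarrow> ('l \<Rightarrow> 'l \<Rightarrow> 'l) \<Rightarrow> 'l \<Rightarrow> bool" where
  "pure_extremal sc br a \<longleftrightarrow> extremal sc br a \<and> \<not> sandwich br a"

inductive_set lie_generated :: "('k::field \<Rightarrow> 'l::ab_group_add \<Rightarrow> 'l) \<Rightarrow> ('l \<Rightarrow> 'l \<Rightarrow> 'l) \<Rightarrow> 'l set \<Rightarrow> 'l set"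
  for sc br S where
    gen: "a \<in> S \<Longrightarrow> a \<in> lie_generated sc br S"
  | zero: "0 \<in> lie_generated sc br S"
  | add: "a \<in> lie_generated sc br S \<Longrightarrow> b \<in> lie_generated sc br S \<Longrightarrow> a + b \<in> lie_generated sc br S"
  | scale: "a \<in> lie_generated sc br S \<Longrightarrow> sc c a \<in> lie_generated sc br S"
  | bracket: "a \<in> lie_generated sc br S \<Longrightarrow> b \<in> lie_generated sc br S \<Longrightarrow> br a b \<in> lie_generated sc br S"

definition extremal_bilinear_form :: "('k::field \<Rightarrow> 'l::ab_group_add \<Rightarrow> 'l) \<Rightarrow> ('l \<Rightarrow> 'l \<Rightarrow> 'l) \<Rightarrow> ('l \<Rightarrow> 'l \<Rightarrow> 'k) \<Rightarrow> bool" where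
  "extremal_bilinear_form sc br g \<longleftrightarrow>
     (\<forall>a. Vector_Spaces.linear sc (*) (g a)) \<and>
     (\<forall>a b. g a b = g b a) \<and>
     (\<forall>a. extremal sc br a \<longrightarrow> extremal_form sc br a (g a) \<and> (sandwich br a \<longrightarrow> (\<forall>u. g a u = 0)))"

definition lie_exp :: "('k::field \<Rightarrow> 'l::ab_group_add \<Rightarrow> 'l) \<Rightarrow> ('l \<Rightarrow> 'l \<Rightarrow> 'l) \<Rightarrow> ('l \<Rightarrow> 'l \<Rightarrow> 'k) \<Rightarrow> 'l \<Rightarrow> 'l \<Rightarrow> 'l" where
  "lie_exp sc br g a u = u + br a u + sc (g a u) a"

definition grade_U :: "('l::ab_group_add \<Rightarrow> 'l \<Rightarrow> 'l) \<Rightarrow> ('l \<Rightarrow> 'l \<Rightarrow> 'k::field) \<Rightarrow> 'l \<Rightarrow> 'l \<Rightarrow> 'l set" where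
  "grade_U br g x y = {u. g u x = 0 \<and> g u y = 0 \<and> g u (br x y) = 0}"

definition grade_m1 :: "('l::ab_group_add \<Rightarrow> 'l \<Rightarrow> 'l) \<Rightarrow> ('l \<Rightarrow> 'l \<Rightarrow> 'k::field) \<Rightarrow> 'l \<Rightarrow> 'l \<Rightarrow> 'l set" where
  "grade_m1 br g x y = br x ` grade_U br g x y"

definition grade_0 :: "('k::field \<Rightarrow> 'l::ab_group_add \<Rightarrow> 'l) \<Rightarrow> ('l \<Rightarrow> 'l \<Rightarrow> 'l) \<Rightarrow> 'l \<Rightarrow> 'l \<Rightarrow> 'l set" where
  "grade_0 sc br x y = {l. br x l \<in> range (\<lambda>c. sc c x) \<and> br y l \<in> range (\<lambda>c. sc c y)}"

definition grade_1 :: "('l::ab_group_add \<Rightarrow> 'l \<Rightarrow> 'l) \<Rightarrow> ('l \<Rightarrow> 'l \<Rightarrow> 'k::field) \<Rightarrow> 'l \<Rightarrow> 'l \<Rightarrow> 'l set" where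
  "grade_1 br g x y = br y ` grade_U br g x y"

end

theory Submission
  imports Defs
begin

text \<open>For extremal x, y with g(x,y) = 1 the elements x, [x,y], y span a copy of sl_2, and
  \<phi> acts on it as the Weyl reflection.  Each exp(a) is a Lie automorphism with inverse exp(-a),
  so exp(a)(b) is extremal with form g_b \<circ> exp(-a); since [exp(a)(b), a] is not a multiple of
  exp(a)(b), this form is forced to be g_{exp(a)(b)}, which gives the invariance
  g(u,[a,b]) = g([u,a],b).  With invariance, the conditions defining U and L_0 make all but one
  or two terms of each exponential vanish, and composing the three exponentials gives the
  formulas.\<close>

locale lie_algebra_with_extremal_form =
  fixes sc :: "'k::field \<Rightarrow> 'l::ab_group_add \<Rightarrow> 'l"
    and br :: "'l \<Rightarrow> 'l \<Rightarrow> 'l"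
    and g :: "'l \<Rightarrow> 'l \<Rightarrow> 'k"
  assumes lie_algebra: "lie_algebra sc br"
    and extremal_bilinear_form: "extremal_bilinear_form sc br g"
begin

sublocale vector_space sc
  using lie_algebra by (simp add: lie_algebra_def)

lemma bracket_linear_right: "module_hom sc sc (br a)"
  using lie_algebra by (simp add: lie_algebra_def linear_iff_module_hom)

lemma bracket_linear_left: "module_hom sc sc (\<lambda>u. br u b)"
  using lie_algebra by (simp add: lie_algebra_def linear_iff_module_hom)

lemma g_linear_right: "module_hom sc (*) (g a)"
  using extremal_bilinear_form by (simp add: extremal_bilinear_form_def linear_iff_module_hom)

lemmas bracket_add_right [simp] = module_hom.add[OF bracket_linear_right]
  and bracket_scale_right [simp] = module_hom.scale[OF bracket_linear_right]
  and bracket_diff_right [simp] = module_hom.diff[OF bracket_linear_right]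
  and bracket_minus_right [simp] = module_hom.neg[OF bracket_linear_right]
  and bracket_zero_right [simp] = module_hom.zero[OF bracket_linear_right]
  and bracket_add_left [simp] = module_hom.add[OF bracket_linear_left]
  and bracket_scale_left [simp] = module_hom.scale[OF bracket_linear_left]
  and bracket_minus_left [simp] = module_hom.neg[OF bracket_linear_left]
  and bracket_zero_left [simp] = module_hom.zero[OF bracket_linear_left]
  and g_add_right [simp] = module_hom.add[OF g_linear_right]
  and g_scale_right [simp] = module_hom.scale[OF g_linear_right]
  and g_diff_right [simp] = module_hom.diff[OF g_linear_right]
  and g_minus_right [simp] = module_hom.neg[OF g_linear_right]
  and g_zero_right [simp] = module_hom.zero[OF g_linear_right]

lemma bracket_self [simp]: "br a a = 0"
  using lie_algebra by (simp add: lie_algebra_def)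

lemma bracket_anticommute: "br a b = - br b a"
proof -
  have "br (a + b) (a + b) = br a b + br b a"
    by (simp only: bracket_add_left bracket_add_right) simp
  then show ?thesis
    by (simp add: eq_neg_iff_add_eq_0)
qed

lemma bracket_derivation: "br a (br u v) = br (br a u) v + br u (br a v)"
proof -
  have "br a (br u v) + br u (br v a) + br v (br a u) = 0"
    using lie_algebra by (simp add: lie_algebra_def)
  then show ?thesis
    using bracket_anticommute[of v a] bracket_anticommute[of v "br a u"]
    by (simp add: algebra_simps)
qed

lemma g_commute: "g a b = g b a"
  using extremal_bilinear_form by (simp add: extremal_bilinear_form_def)

lemma g_minus_left [simp]: "g (- a) u = - g a u"
  by (metis g_commute g_minus_right)

lemma scale_two: "sc 2 v = v + v" "sc (2 * c) v = sc c v + sc c v"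
  by (metis mult_2 one_add_one scale_left_distrib scale_one)+

lemma eq_scale_if_scale_eq:
  assumes "sc d v = sc e w" and "d \<noteq> 0"
  shows "v = sc (e / d) w"
proof -
  have "v = sc (inverse d) (sc d v)"
    using assms(2) by simp
  also have "\<dots> = sc (e / d) w"
    using assms(1) by (metis scale_scale divide_inverse_commute)
  finally show ?thesis .
qed

lemma extremal_formD:
  assumes "extremal_form sc br a f"
  shows "br a (br a u) = sc (2 * f u) a"
    and "br (br a u) (br a w) = sc (f (br u w)) a + sc (f w) (br a u) - sc (f u) (br a w)"
    and "br a (br u (br a w)) = sc (f (br u w)) a - sc (f w) (br a u) - sc (f u) (br a w)"
  using assms by (simp_all add: extremal_form_def)

lemma extremal_form_g: "extremal sc br a \<Longrightarrow> extremal_form sc br a (g a)"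
  using extremal_bilinear_form by (simp add: extremal_bilinear_form_def)

lemma extremal_nonzero: "extremal sc br a \<Longrightarrow> a \<noteq> 0"
  by (simp add: extremal_def)

lemma sandwich_g_eq_0: "extremal sc br a \<Longrightarrow> sandwich br a \<Longrightarrow> g a u = 0"
  using extremal_bilinear_form by (simp add: extremal_bilinear_form_def)

lemma sandwichI:
  assumes "\<And>w. \<exists>c. br a w = sc c a"
  shows "sandwich br a"
  unfolding sandwich_def
proof (intro allI conjI)
  fix u w
  obtain c d where u: "br a u = sc c a" and w: "br a w = sc d a"
    using assms by blast
  show "br a (br a u) = 0"
    by (simp add: u)
  have "br u (br a w) = - sc d (br a u)"
    by (simp add: w bracket_anticommute[of u a])
  then show "br a (br u (br a w)) = 0"
    by (simp add: u)
qed

lemma scale_g_self_bracket: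
  assumes "extremal sc br a"
  shows "sc (g a a) (br a w) = sc (g a (br a w)) a"
  using extremal_formD(2)[OF extremal_form_g[OF assms], of a w] by (simp add: algebra_simps)

lemma g_self_eq_0:
  assumes a: "extremal sc br a"
  shows "g a a = 0"
proof (rule ccontr)
  assume "g a a \<noteq> 0"
  then have "\<exists>c. br a w = sc c a" for w
    using eq_scale_if_scale_eq[OF scale_g_self_bracket[OF a]] by blast
  then have "sandwich br a"
    by (rule sandwichI)
  with \<open>g a a \<noteq> 0\<close> show False
    using sandwich_g_eq_0[OF a] by blast
qed

lemma g_bracket_self_eq_0:
  assumes a: "extremal sc br a"
  shows "g a (br a w) = 0"
  using scale_g_self_bracket[OF a, of w] g_self_eq_0[OF a] extremal_nonzero[OF a] by simp

lemma bracket_neq_0_if_g_neq_0: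
  assumes a: "extremal sc br a" and gab: "g a b \<noteq> 0"
  shows "br a b \<noteq> 0"
proof
  assume ab: "br a b = 0"
  have "sc (g a b) (br a w) = sc (g a (br w b)) a" for w
    using extremal_formD(3)[OF extremal_form_g[OF a], of w b] ab by (simp add: algebra_simps)
  then have "\<exists>c. br a w = sc c a" for w
    using eq_scale_if_scale_eq gab by blast
  then have "sandwich br a"
    by (rule sandwichI)
  with gab show False
    using sandwich_g_eq_0[OF a] by blast
qed

lemma pair_bracket_independent:
  assumes a: "extremal sc br a" and b: "extremal sc br b" and gab: "g a b \<noteq> 0"
    and dep: "sc p a + sc q b + sc r (br a b) = 0"
  shows "p = 0 \<and> q = 0 \<and> r = 0"
proof -
  have gba: "g b a \<noteq> 0"
    using gab g_commute by simp
  have "g b (br a b) = 0"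
    using g_bracket_self_eq_0[OF b, of a] bracket_anticommute[of a b] by simp
  then have "p * g b a = 0"
    using arg_cong[OF dep, of "g b"] g_self_eq_0[OF b] by simp
  moreover have "q * g a b = 0"
    using arg_cong[OF dep, of "g a"] g_self_eq_0[OF a] g_bracket_self_eq_0[OF a] by simp
  ultimately have p: "p = 0" and q: "q = 0"
    using gab gba by simp_all
  then have "sc r (br a b) = 0"
    using dep by simp
  with p q show ?thesis
    using bracket_neq_0_if_g_neq_0[OF a gab] by simp
qed

abbreviation Exp :: "'l \<Rightarrow> 'l \<Rightarrow> 'l" where
  "Exp a \<equiv> lie_exp sc br g a"

lemma lie_exp_linear: "module_hom sc sc (Exp a)"
  by unfold_locales (simp_all add: lie_exp_def algebra_simps)

lemmas lie_exp_add [simp] = module_hom.add[OF lie_exp_linear]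
  and lie_exp_scale [simp] = module_hom.scale[OF lie_exp_linear]
  and lie_exp_diff [simp] = module_hom.diff[OF lie_exp_linear]
  and lie_exp_minus [simp] = module_hom.neg[OF lie_exp_linear]

lemma lie_exp_bracket:
  assumes a: "extremal sc br a"
  shows "Exp a (br u v) = br (Exp a u) (Exp a v)"
proof -
  note D = extremal_formD[OF extremal_form_g[OF a]]
  have "br (br a u) a = - sc (2 * g a u) a"
    by (subst bracket_anticommute) (simp add: D(1))
  then show ?thesis
    unfolding lie_exp_def
    using D(1)[of v] D(2)[of u v] bracket_anticommute[of u a] bracket_derivation[of a u v]
    by (simp add: algebra_simps)
qed

lemma lie_exp_lie_exp_uminus:
  assumes a: "extremal sc br a"
  shows "Exp a (Exp (- a) v) = v" and "Exp (- a) (Exp a v) = v"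
  using g_self_eq_0[OF a] g_bracket_self_eq_0[OF a]
    extremal_formD(1)[OF extremal_form_g[OF a], of v]
  by (simp_all add: lie_exp_def algebra_simps scale_two)

lemma extremal_form_automorphism_image:
  assumes f: "extremal_form sc br b f"
    and lin: "module_hom sc sc \<sigma>"
    and hom: "\<And>u v. \<sigma> (br u v) = br (\<sigma> u) (\<sigma> v)"
    and inv: "\<And>v. \<sigma> (\<tau> v) = v" "\<And>v. \<tau> (\<sigma> v) = v"
  shows "extremal_form sc br (\<sigma> b) (f \<circ> \<tau>)"
  unfolding extremal_form_def comp_def
proof (intro allI)
  fix u w
  obtain u' w' where u: "u = \<sigma> u'" and w: "w = \<sigma> w'"
    using inv(1) by metis
  have uw: "\<tau> (br u w) = br u' w'"
    by (simp add: u w hom[symmetric] inv(2))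
  note lin_simps = module_hom.scale[OF lin] module_hom.add[OF lin] module_hom.diff[OF lin]
  show "br (\<sigma> b) (br (\<sigma> b) u) = sc (2 * f (\<tau> u)) (\<sigma> b) \<and>
      br (br (\<sigma> b) u) (br (\<sigma> b) w) =
        sc (f (\<tau> (br u w))) (\<sigma> b) + sc (f (\<tau> w)) (br (\<sigma> b) u) - sc (f (\<tau> u)) (br (\<sigma> b) w) \<and>
      br (\<sigma> b) (br u (br (\<sigma> b) w)) =
        sc (f (\<tau> (br u w))) (\<sigma> b) - sc (f (\<tau> w)) (br (\<sigma> b) u) - sc (f (\<tau> u)) (br (\<sigma> b) w)"
    using arg_cong[OF extremal_formD(1)[OF f, of u'], of \<sigma>]
      arg_cong[OF extremal_formD(2)[OF f, of u' w'], of \<sigma>]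
      arg_cong[OF extremal_formD(3)[OF f, of u' w'], of \<sigma>]
    unfolding uw by (simp add: u w inv(2) hom lin_simps)
qed

lemma extremal_form_unique:
  assumes f1: "extremal_form sc br z f1" and f2: "extremal_form sc br z f2"
    and agree: "f1 a = f2 a" and not_parallel: "\<nexists>c. br z a = sc c z"
  shows "f1 u = f2 u"
proof (rule ccontr)
  assume "f1 u \<noteq> f2 u"
  moreover have "sc (f1 u - f2 u) (br z a) = sc (f1 (br u a) - f2 (br u a)) z"
    using extremal_formD(2)[OF f1, of u a] extremal_formD(2)[OF f2, of u a] agree
    by (simp add: algebra_simps)
  ultimately have "br z a = sc ((f1 (br u a) - f2 (br u a)) / (f1 u - f2 u)) z"
    by (simp add: eq_scale_if_scale_eq)
  with not_parallel show False
    by blast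
qed

lemma g_bracket_assoc:
  assumes a: "extremal sc br a" and b: "extremal sc br b" and gab: "g a b = 1"
  shows "g u (br a b) = g (br u a) b"
proof -
  define z where "z = Exp a b"
  have z: "z = b + br a b + a"
    using gab by (simp add: z_def lie_exp_def)
  have z_form: "extremal_form sc br z (g b \<circ> Exp (- a))"
    unfolding z_def
    using extremal_form_automorphism_image[OF extremal_form_g[OF b] lie_exp_linear
        lie_exp_bracket[OF a]] lie_exp_lie_exp_uminus[OF a]
    by blast
  have gaz: "g a z = 1"
    using gab g_self_eq_0[OF a] g_bracket_self_eq_0[OF a] by (simp add: z)
  then have "extremal sc br z"
    using z_form by (auto simp: extremal_def)
  moreover have "\<nexists>c. br z a = sc c z"
  proof
    assume "\<exists>c. br z a = sc c z"
    then obtain c where c: "br z a = sc c z" ..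
    have "sc (c + 2) a + sc c b + sc (c + 1) (br a b) = sc c z - br z a"
      using extremal_formD(1)[OF extremal_form_g[OF a], of b] gab
        bracket_anticommute[of b a] bracket_anticommute[of "br a b" a]
      by (simp add: z algebra_simps scale_two)
    then have "sc (c + 2) a + sc c b + sc (c + 1) (br a b) = 0"
      by (simp add: c)
    then have "c = 0" and "c + 1 = 0"
      using pair_bracket_independent[OF a b] gab by simp_all
    then show False
      by simp
  qed
  moreover have "(g b \<circ> Exp (- a)) a = g z a"
  proof -
    have "g b a = 1" "g z a = 1"
      using gab gaz by (simp_all add: g_commute[of _ a])
    then show ?thesis
      using g_self_eq_0[OF a] by (simp add: lie_exp_def)
  qed
  ultimately have "g z u = g b (Exp (- a) u)"
    using extremal_form_unique[OF extremal_form_g z_form] by (metis comp_apply)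
  then have "g u z = g b (Exp (- a) u)"
    by (metis g_commute)
  then have "g u b + g u (br a b) + g u a = g b u - g b (br a u) + g a u * g b a"
    by (simp add: z lie_exp_def)
  moreover have "g u b = g b u" "g u a = g a u" "g b a = 1" "g (br u a) b = - g b (br a u)"
    using gab bracket_anticommute[of u a] by (metis g_commute g_minus_right)+
  ultimately show ?thesis
    by simp
qed

lemma lie_exp_if_g_eq_0: "g a v = 0 \<Longrightarrow> Exp a v = v + br a v"
  by (simp add: lie_exp_def)

lemma lie_exp_self:
  assumes "extremal sc br a"
  shows "Exp a a = a"
  using g_self_eq_0[OF assms] by (simp add: lie_exp_def)

lemma lie_exp_fixes_bracket:
  assumes a: "extremal sc br a" and "g a u = 0"
  shows "Exp a (br a u) = br a u"
  using extremal_formD(1)[OF extremal_form_g[OF a], of u] g_bracket_self_eq_0[OF a, of u] assms(2)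
  by (simp add: lie_exp_def)

lemma lie_exp_bracket_bracket:
  assumes a: "extremal sc br a" and gab: "g a b = 1" and gau: "g a u = 0"
    and gabu: "g a (br b u) = 0"
  shows "Exp a (br b (br a u)) = br b (br a u) - br a u"
proof -
  note D = extremal_formD[OF extremal_form_g[OF a]]
  have aau: "br a (br a u) = 0"
    using D(1)[of u] gau by simp
  have "sc (g a (br b (br a u))) a = 0"
    using D(2)[of b "br a u"] aau g_bracket_self_eq_0[OF a, of u] by simp
  then have "g a (br b (br a u)) = 0"
    using extremal_nonzero[OF a] by simp
  moreover have "br a (br b (br a u)) = - br a u"
    using D(3)[of b u] gau gabu gab by simp
  ultimately show ?thesis
    by (simp add: lie_exp_def)
qed

lemma lie_exp_bracket_pair:
  assumes a: "extremal sc br a" and gab: "g a b = 1"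
  shows "Exp a (br a b) = br a b + sc 2 a"
  using extremal_formD(1)[OF extremal_form_g[OF a], of b] gab g_bracket_self_eq_0[OF a, of b]
  by (simp add: lie_exp_def)

lemma lie_exp_lie_exp_pair:
  assumes a: "extremal sc br a" and b: "extremal sc br b" and gab: "g a b = 1"
  shows "Exp a (Exp b a) = b"
proof -
  have "Exp b a = a - br a b + b"
    using gab bracket_anticommute[of b a] by (simp add: lie_exp_def g_commute[of b a])
  then have "Exp a (Exp b a) = Exp a a - Exp a (br a b) + Exp a b"
    by simp
  also have "\<dots> = a - (br a b + sc 2 a) + (b + br a b + a)"
    using lie_exp_self[OF a] lie_exp_bracket_pair[OF a gab] gab by (simp add: lie_exp_def)
  also have "\<dots> = b"
    by (simp add: scale_two)
  finally show ?thesis .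
qed

lemma grade_U_commute: "grade_U br g a b = grade_U br g b a"
  by (auto simp: grade_U_def bracket_anticommute[of b a])

lemma g_bracket_grade_U:
  assumes a: "extremal sc br a" and b: "extremal sc br b" and gab: "g a b = 1"
    and u: "u \<in> grade_U br g a b"
  shows "g b (br a u) = 0"
proof -
  have "g (br u a) b = 0"
    using u g_bracket_assoc[OF a b gab, of u] by (simp add: grade_U_def)
  then show ?thesis
    using bracket_anticommute[of u a] by (metis g_commute g_minus_right neg_equal_0_iff_equal)
qed

lemma lie_exp_lie_exp_bracket_grade_U:
  assumes a: "extremal sc br a" and b: "extremal sc br b" and gab: "g a b = 1"
    and u: "u \<in> grade_U br g a b"
  shows "Exp a (Exp b (br a u)) = br b (br a u)"
proof -
  have gba: "g b a = 1"
    using gab g_commute by simp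
  have gau: "g a u = 0"
    using u g_commute by (simp add: grade_U_def)
  have "g a (br b u) = 0"
    using g_bracket_grade_U[OF b a gba] u grade_U_commute by blast
  then have "Exp a (br b (br a u)) = br b (br a u) - br a u"
    using lie_exp_bracket_bracket[OF a gab gau] by blast
  moreover have "Exp b (br a u) = br a u + br b (br a u)"
    using lie_exp_if_g_eq_0 g_bracket_grade_U[OF assms] by blast
  ultimately show ?thesis
    using lie_exp_fixes_bracket[OF a gau] by simp
qed

lemma lie_exp_triple_grade_m1:
  assumes a: "extremal sc br a" and b: "extremal sc br b" and gab: "g a b = 1"
    and u: "u \<in> grade_U br g a b"
  shows "Exp b (Exp a (Exp b (br a u))) = br b (br a u)"
  using lie_exp_lie_exp_bracket_grade_U[OF assms] lie_exp_fixes_bracket[OF b g_bracket_grade_U[OF assms]]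
  by simp

lemma lie_exp_triple_grade_1:
  assumes a: "extremal sc br a" and b: "extremal sc br b" and gab: "g a b = 1"
    and u: "u \<in> grade_U br g a b"
  shows "Exp b (Exp a (Exp b (br b u))) = br a (br b u)"
proof -
  have gba: "g b a = 1"
    using gab g_commute by simp
  have "g b u = 0"
    using u g_commute by (simp add: grade_U_def)
  moreover have "u \<in> grade_U br g b a"
    using u grade_U_commute by blast
  ultimately show ?thesis
    using lie_exp_fixes_bracket[OF b] lie_exp_lie_exp_bracket_grade_U[OF b a gba] by simp
qed

lemma grade_0_coefficients:
  assumes a: "extremal sc br a" and b: "extremal sc br b" and gab: "g a b = 1"
    and la: "br a l = sc \<alpha> a" and lb: "br b l = sc \<beta> b"
  shows "g b l = 0" and "\<alpha> + \<beta> = 0"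
proof -
  note D = extremal_formD[OF extremal_form_g[OF b]]
  have bab: "br b (br a b) = - sc 2 b"
    using D(1)[of a] gab bracket_anticommute[of a b] by (simp add: g_commute[of b a])
  have D3: "sc \<beta> (br b (br a b)) = sc \<alpha> b + sc (g b l) (br a b) - sc \<beta> b"
    using D(3)[of a l] la lb gab bracket_anticommute[of b a] by (simp add: g_commute[of b a])
  have "sc 0 a + sc (\<alpha> + \<beta>) b + sc (g b l) (br a b)
      = (sc \<alpha> b + sc (g b l) (br a b) - sc \<beta> b) - sc \<beta> (br b (br a b))"
    by (simp add: bab algebra_simps scale_two)
  also have "\<dots> = 0"
    by (simp only: D3 diff_self)
  finally have "sc 0 a + sc (\<alpha> + \<beta>) b + sc (g b l) (br a b) = 0" .
  then show "g b l = 0" and "\<alpha> + \<beta> = 0"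
    using pair_bracket_independent[OF a b, of 0] gab by simp_all
qed

lemma lie_exp_triple_grade_0:
  assumes a: "extremal sc br a" and b: "extremal sc br b" and gab: "g a b = 1"
    and l: "l \<in> grade_0 sc br a b"
  shows "Exp b (Exp a (Exp b l)) = l + br a (br b l)"
proof -
  obtain \<alpha> \<beta> where la: "br a l = sc \<alpha> a" and lb: "br b l = sc \<beta> b"
    using l by (auto simp: grade_0_def)
  have gba: "g b a = 1"
    using gab g_commute by simp
  have gbl: "g b l = 0" and "\<alpha> = - \<beta>"
    using grade_0_coefficients[OF a b gab la lb] by (simp_all add: eq_neg_iff_add_eq_0)
  moreover have "g a l = 0"
    using grade_0_coefficients(1)[OF b a gba lb la] .
  ultimately have "Exp a (Exp b l) = l + sc \<beta> b + sc \<beta> (br a b)"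
    using la lb gab by (simp add: lie_exp_def algebra_simps)
  then have "Exp b (Exp a (Exp b l)) = Exp b l + sc \<beta> (Exp b b) + sc \<beta> (Exp b (br a b))"
    by simp
  also have "\<dots> = l + sc \<beta> b + sc \<beta> b + sc \<beta> (br a b - sc 2 b)"
    using gbl lb lie_exp_self[OF b] lie_exp_bracket_pair[OF b gba] bracket_anticommute[of a b]
    by (simp add: lie_exp_if_g_eq_0)
  also have "\<dots> = l + br a (br b l)"
    using lb by (simp add: algebra_simps scale_two)
  finally show ?thesis .
qed

end

theorem lemma2p8:
  fixes sc :: "'k::field \<Rightarrow> 'l::ab_group_add \<Rightarrow> 'l"
    and br :: "'l \<Rightarrow> 'l \<Rightarrow> 'l"
    and g :: "'l \<Rightarrow> 'l \<Rightarrow> 'k"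
    and x y :: 'l
  assumes "lie_algebra sc br"
    and "lie_generated sc br {a. pure_extremal sc br a} = UNIV"
    and "extremal_bilinear_form sc br g"
    and "x \<in> extremal_set sc br" and "y \<in> extremal_set sc br"
    and "g x y = 1"
  defines "\<phi> \<equiv> lie_exp sc br g y \<circ> lie_exp sc br g x \<circ> lie_exp sc br g y"
  shows "\<phi> x = y \<and> \<phi> y = x
    \<and> (\<forall>l \<in> grade_m1 br g x y. \<phi> l = br y l)
    \<and> (\<forall>l \<in> grade_0 sc br x y. \<phi> l = l + br x (br y l))
    \<and> (\<forall>l \<in> grade_1 br g x y. \<phi> l = br x l)"
proof -
  interpret lie_algebra_with_extremal_form sc br g
    using assms(1,3) by unfold_locales
  have x: "extremal sc br x" and y: "extremal sc br y"
    using assms(4,5) by (simp_all add: extremal_set_def)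
  have gyx: "g y x = 1"
    using assms(6) g_commute by simp
  show ?thesis
    unfolding \<phi>_def comp_def grade_m1_def grade_1_def
    using lie_exp_lie_exp_pair[OF x y assms(6)] lie_exp_lie_exp_pair[OF y x gyx]
      lie_exp_self[OF y] lie_exp_triple_grade_m1[OF x y assms(6)]
      lie_exp_triple_grade_0[OF x y assms(6)] lie_exp_triple_grade_1[OF x y assms(6)]
    by auto
qed

end
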